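(* Let $0<\sigma_0<s$ and $\sigma_1=-\log(1-\sigma_0/s)$, and assume $s+\sigma_1\le1$. Then for every $f\in\mathcal{A}(\mathrm{T}^n_{s+\sigma_1})$, $$|f|_s^2\le|f|_{s-\sigma_0}|f|_{s+\sigma_1}.$$
   Context: $\mathbb{T}^n_s=\{\theta\in\mathbb{C}^n/2\pi\mathbb{Z}^n:|\mathrm{Im}\,\theta_j|\le s\ \forall j\}$, $\mathbb{D}^n_s=\{r\in\mathbb{C}^n:|r_j|\le s\ \forall j\}$, $\mathrm{T}^n_s=\mathbb{T}^n_s\times\mathbb{D}^n_s$. $\mathcal{A}(\mathrm{T}^n_s)$ is the space of continuous complex functions on $\mathrm{T}^n_s$ analytic in its interior, and $|f|_s=\sup_{\mathrm{T}^n_s}|f|$. *)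

theory Defs
  imports "HOL-Analysis.Analysis"
begin

text \<open>Points of C^n x C^n; the angle part theta is taken in C^n, and functions on
  the quotient C^n / 2 pi Z^n are represented as 2 pi-periodic functions in each theta_j.\<close>

definition Tdom :: "real \<Rightarrow> ((complex^'n) \<times> (complex^'n)) set" where
  "Tdom s = {(\<theta>, r). (\<forall>j. \<bar>Im (\<theta> $ j)\<bar> \<le> s) \<and> (\<forall>j. cmod (r $ j) \<le> s)}"

definition holo_several ::
  "((complex^'n) \<times> (complex^'n) \<Rightarrow> complex) \<Rightarrow> ((complex^'n) \<times> (complex^'n)) set \<Rightarrow> bool" where
  "holo_several f S \<longleftrightarrow>
     (\<forall>z\<in>S. \<exists>D. (f has_derivative D) (at z) \<and>
        (\<forall>v. D (\<i> *s fst v, \<i> *s snd v) = \<i> * D v))"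

definition angle_periodic ::
  "((complex^'n) \<times> (complex^'n) \<Rightarrow> complex) \<Rightarrow> ((complex^'n) \<times> (complex^'n)) set \<Rightarrow> bool" where
  "angle_periodic f S \<longleftrightarrow>
     (\<forall>\<theta> r j. (\<theta>, r) \<in> S \<longrightarrow> f (\<theta> + axis j (complex_of_real (2 * pi)), r) = f (\<theta>, r))"

definition A_space :: "real \<Rightarrow> ((complex^'n) \<times> (complex^'n) \<Rightarrow> complex) set" where
  "A_space s = {f. continuous_on (Tdom s) f \<and> holo_several f (interior (Tdom s))
                   \<and> angle_periodic f (Tdom s)}"

definition supnorm :: "real \<Rightarrow> ((complex^'n) \<times> (complex^'n) \<Rightarrow> complex) \<Rightarrow> real" where
  "supnorm s f = (SUP z\<in>Tdom s. cmod (f z))"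

end

theory Submission
  imports Defs "HOL-Complex_Analysis.Conformal_Mappings"
begin

text \<open>Fix \<open>p = (\<theta>, r)\<close> in \<open>Tdom s\<close>, put \<open>\<kappa> = \<sigma>\<^sub>1 / \<sigma>\<^sub>0\<close> and restrict \<open>f\<close> to the
  complex curve \<open>u \<mapsto> (Re \<theta> + \<i> u Im \<theta> / s, exp (\<kappa> (u - s)) r)\<close>, which passes through
  \<open>p\<close> at \<open>u = s\<close>. On the line \<open>Re u = c\<close> its angles satisfy \<open>\<bar>Im \<theta>\<^sub>j\<bar> \<le> c\<close> and its
  actions have modulus at most \<open>s exp (\<kappa> (c - s))\<close>. So the strip
  \<open>s - \<sigma>\<^sub>0 \<le> Re u \<le> s + \<sigma>\<^sub>0\<close> is mapped into \<open>Tdom (s + \<sigma>\<^sub>1)\<close>, its left edge into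
  \<open>Tdom (s - \<sigma>\<^sub>0)\<close> because \<open>s exp (- \<sigma>\<^sub>1) = s - \<sigma>\<^sub>0\<close>, and its right edge into
  \<open>Tdom (s + \<sigma>\<^sub>1)\<close> because \<open>s exp \<sigma>\<^sub>1 \<le> s + \<sigma>\<^sub>1\<close> when \<open>s + \<sigma>\<^sub>1 \<le> 1\<close>.
  Periodicity in the angles makes \<open>f\<close> bounded, so the maximum principle on the unbounded
  strip \<open>\<bar>Re u\<bar> \<le> \<sigma>\<^sub>0\<close> applies to \<open>g (s + u) g (s - u)\<close>, \<open>g\<close> the restriction of \<open>f\<close>;
  at \<open>u = 0\<close> it gives \<open>\<bar>f p\<bar>\<^sup>2 \<le> supnorm (s - \<sigma>\<^sub>0) f * supnorm (s + \<sigma>\<^sub>1) f\<close>.\<close>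

lemma Tdom_eq: "Tdom T = {z. \<forall>j. \<bar>Im (fst z $ j)\<bar> \<le> T \<and> cmod (snd z $ j) \<le> T}"
  by (auto simp: Tdom_def)

lemma closed_Tdom: "closed (Tdom T)"
  unfolding Tdom_eq
  by (intro closed_Collect_all closed_Collect_conj closed_Collect_le continuous_intros)

lemma Tdom_mono: "t \<le> t' \<Longrightarrow> Tdom t \<subseteq> Tdom t'"
  by (auto simp: Tdom_def) (meson order.trans)+

lemma zero_in_Tdom: "0 \<le> T \<Longrightarrow> (0, 0) \<in> Tdom T"
  by (simp add: Tdom_def)

lemma Tdom_add_real:
  assumes "(\<theta>, r) \<in> Tdom T" "\<forall>i. Im (v $ i) = 0"
  shows "(\<theta> + v, r) \<in> Tdom T"
  using assms by (auto simp: Tdom_def)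

lemma interior_Tdom_superset:
  "{z::(complex^'n) \<times> (complex^'n). \<forall>j. \<bar>Im (fst z $ j)\<bar> < T \<and> cmod (snd z $ j) < T}
     \<subseteq> interior (Tdom T)"
proof (rule interior_maximal)
  have "{z::(complex^'n) \<times> (complex^'n). \<forall>j. \<bar>Im (fst z $ j)\<bar> < T \<and> cmod (snd z $ j) < T}
      = (\<Inter>j. {z. \<bar>Im (fst z $ j)\<bar> < T} \<inter> {z. cmod (snd z $ j) < T})"
    by auto
  then show "open {z::(complex^'n) \<times> (complex^'n). \<forall>j. \<bar>Im (fst z $ j)\<bar> < T \<and> cmod (snd z $ j) < T}"
    by (simp only:)
      (intro open_INT finite_class.finite_UNIV ballI open_Int open_Collect_less continuous_intros)
qed (auto simp: Tdom_def less_imp_le)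

lemma angle_periodic_axis_int:
  assumes per: "angle_periodic f (Tdom T)" and z: "(\<theta>, r) \<in> Tdom T"
  shows "f (\<theta> + axis j (of_int k * complex_of_real (2*pi)), r) = f (\<theta>, r)"
proof (induction k rule: int_induct[where k = 0])
  case base
  have "\<theta> + axis j (of_int 0 * complex_of_real (2*pi)) = \<theta>" by (simp add: vec_eq_iff axis_def)
  then show ?case by (simp only:)
next
  case (step1 i)
  let ?\<theta>' = "\<theta> + axis j (of_int i * complex_of_real (2*pi))"
  have "(?\<theta>', r) \<in> Tdom T" by (rule Tdom_add_real[OF z]) (simp add: axis_def)
  have "\<theta> + axis j (of_int (i + 1) * complex_of_real (2*pi)) = ?\<theta>' + axis j (complex_of_real (2*pi))"
    by (simp add: vec_eq_iff axis_def algebra_simps)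
  then have "f (\<theta> + axis j (of_int (i + 1) * complex_of_real (2*pi)), r)
      = f (?\<theta>' + axis j (complex_of_real (2*pi)), r)"
    by (simp only:)
  also have "\<dots> = f (?\<theta>', r)"
    using per \<open>(?\<theta>', r) \<in> Tdom T\<close> unfolding angle_periodic_def by blast
  also have "\<dots> = f (\<theta>, r)" by (rule step1(2))
  finally show ?case .
next
  case (step2 i)
  let ?\<theta>' = "\<theta> + axis j (of_int (i - 1) * complex_of_real (2*pi))"
  have "(?\<theta>', r) \<in> Tdom T" by (rule Tdom_add_real[OF z]) (simp add: axis_def)
  then have "f (?\<theta>', r) = f (?\<theta>' + axis j (complex_of_real (2*pi)), r)"
    using per unfolding angle_periodic_def by metis
  also have "?\<theta>' + axis j (complex_of_real (2*pi)) = \<theta> + axis j (of_int i * complex_of_real (2*pi))"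
    by (simp add: vec_eq_iff axis_def algebra_simps)
  also have "f (\<theta> + axis j (of_int i * complex_of_real (2*pi)), r) = f (\<theta>, r)" by (rule step2(2))
  finally show ?case .
qed

lemma angle_periodic_lattice:
  fixes f :: "(complex^'n) \<times> (complex^'n) \<Rightarrow> complex"
  assumes per: "angle_periodic f (Tdom T)" and z: "(\<theta>, r) \<in> Tdom T"
  shows "f (\<theta> + (\<chi> i. of_int (k i) * complex_of_real (2*pi)), r) = f (\<theta>, r)"
proof -
  have "\<forall>\<theta>. (\<theta>, r) \<in> Tdom T \<longrightarrow>
      f (\<theta> + (\<chi> i. if i \<in> J then of_int (k i) * complex_of_real (2*pi) else 0), r) = f (\<theta>, r)"
    if "finite J" for J
    using that
  proof (induction J rule: finite_induct)
    case empty
    have "(\<chi> i. (0::complex)) = (0::complex^'n)" by (simp add: vec_eq_iff)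
    then show ?case by simp
  next
    case (insert j J)
    show ?case
    proof (intro allI impI)
      fix \<theta> assume z: "(\<theta>, r) \<in> Tdom T"
      let ?\<theta>' = "\<theta> + (\<chi> i. if i \<in> J then of_int (k i) * complex_of_real (2*pi) else 0)"
      let ?\<theta>'' = "\<theta> + (\<chi> i. if i \<in> insert j J then of_int (k i) * complex_of_real (2*pi) else 0)"
      have "?\<theta>'' = ?\<theta>' + axis j (of_int (k j) * complex_of_real (2*pi))"
        using insert(2) by (auto simp: vec_eq_iff axis_def)
      then have "f (?\<theta>'', r) = f (?\<theta>' + axis j (of_int (k j) * complex_of_real (2*pi)), r)"
        by (simp only:)
      also have "\<dots> = f (?\<theta>', r)"
        by (rule angle_periodic_axis_int[OF per Tdom_add_real[OF z]]) simp
      also have "\<dots> = f (\<theta>, r)" using insert(3) z by blast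
      finally show "f (?\<theta>'', r) = f (\<theta>, r)" .
    qed
  qed
  from this[OF finite_class.finite_UNIV] z show ?thesis by simp
qed

lemma norm_vec_le_card_mult:
  fixes x :: "'a::real_normed_vector^'n"
  assumes "\<And>i. norm (x $ i) \<le> c"
  shows "norm x \<le> real CARD('n) * c"
proof -
  have "norm x = L2_set (\<lambda>i. norm (x $ i)) UNIV" by (simp add: norm_vec_def)
  also have "\<dots> \<le> (\<Sum>i\<in>UNIV. norm (x $ i))" by (rule L2_set_le_sum) simp
  also have "\<dots> \<le> (\<Sum>i\<in>(UNIV::'n set). c)" by (rule sum_mono) (use assms in auto)
  finally show ?thesis by simp
qed

definition Tdom_fundamental :: "real \<Rightarrow> ((complex^'n) \<times> (complex^'n)) set" where
  "Tdom_fundamental T = {z \<in> Tdom T. \<forall>j. 0 \<le> Re (fst z $ j) \<and> Re (fst z $ j) \<le> 2*pi}"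

lemma compact_Tdom_fundamental:
  "compact (Tdom_fundamental T :: ((complex^'n) \<times> (complex^'n)) set)"
proof -
  have "(Tdom_fundamental T :: ((complex^'n) \<times> (complex^'n)) set)
      = Tdom T \<inter> {z. \<forall>j. 0 \<le> Re (fst z $ j) \<and> Re (fst z $ j) \<le> 2*pi}"
    by (auto simp: Tdom_fundamental_def)
  then have "closed (Tdom_fundamental T :: ((complex^'n) \<times> (complex^'n)) set)"
    by (simp only:) (intro closed_Int closed_Tdom closed_Collect_all closed_Collect_conj
        closed_Collect_le continuous_intros)
  moreover have "norm z \<le> 2 * (real CARD('n) * (2*pi + \<bar>T\<bar>))"
    if "z \<in> Tdom_fundamental T" for z :: "(complex^'n) \<times> (complex^'n)"
  proof -
    have "cmod (fst z $ i) \<le> 2*pi + \<bar>T\<bar>" for i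
    proof -
      have "\<bar>Re (fst z $ i)\<bar> \<le> 2*pi" "\<bar>Im (fst z $ i)\<bar> \<le> \<bar>T\<bar>"
        using that by (auto simp: Tdom_fundamental_def Tdom_eq) (meson abs_ge_self order.trans)
      then show ?thesis using cmod_le[of "fst z $ i"] by linarith
    qed
    moreover have "cmod (snd z $ i) \<le> 2*pi + \<bar>T\<bar>" for i
      using that pi_gt_zero by (auto simp: Tdom_fundamental_def Tdom_eq) (smt (verit) pi_gt_zero)
    ultimately have "norm (fst z) \<le> real CARD('n) * (2*pi + \<bar>T\<bar>)"
      "norm (snd z) \<le> real CARD('n) * (2*pi + \<bar>T\<bar>)"
      by (blast intro: norm_vec_le_card_mult)+
    then show ?thesis using norm_Pair_le[of "fst z" "snd z"] by simp
  qed
  then have "bounded (Tdom_fundamental T :: ((complex^'n) \<times> (complex^'n)) set)"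
    unfolding bounded_iff by blast
  ultimately show ?thesis by (simp add: compact_eq_bounded_closed)
qed

lemma angle_periodic_reduce_to_fundamental:
  assumes per: "angle_periodic f (Tdom T)" and z: "z \<in> Tdom T"
  obtains z' where "z' \<in> Tdom_fundamental T" "f z' = f z"
proof -
  obtain \<theta> r where zr: "z = (\<theta>, r)" by (cases z)
  define k :: "'a \<Rightarrow> int" where "k i = - \<lfloor>Re (\<theta> $ i) / (2*pi)\<rfloor>" for i
  define \<theta>' where "\<theta>' = \<theta> + (\<chi> i. of_int (k i) * complex_of_real (2*pi))"
  have "(\<theta>', r) \<in> Tdom T" unfolding \<theta>'_def by (rule Tdom_add_real) (use z zr in auto)
  moreover have "0 \<le> Re (\<theta>' $ j) \<and> Re (\<theta>' $ j) \<le> 2*pi" for j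
  proof -
    let ?x = "Re (\<theta> $ j) / (2*pi)"
    have "Re (\<theta>' $ j) = 2*pi * (?x - of_int \<lfloor>?x\<rfloor>)"
      by (simp add: \<theta>'_def k_def algebra_simps)
    moreover have "0 \<le> ?x - of_int \<lfloor>?x\<rfloor>" "?x - of_int \<lfloor>?x\<rfloor> \<le> 1" by linarith+
    ultimately show ?thesis by (simp add: mult_le_cancel_left1)
  qed
  ultimately have "(\<theta>', r) \<in> Tdom_fundamental T" by (simp add: Tdom_fundamental_def)
  moreover have "f (\<theta>', r) = f z"
    unfolding \<theta>'_def zr by (rule angle_periodic_lattice[OF per]) (use z zr in simp)
  ultimately show ?thesis by (rule that)
qed

lemma A_space_bounded:
  fixes f :: "(complex^'n) \<times> (complex^'n) \<Rightarrow> complex"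
  assumes "f \<in> A_space T"
  obtains B where "\<And>z. z \<in> Tdom T \<Longrightarrow> cmod (f z) \<le> B"
proof -
  have cont: "continuous_on (Tdom T) f" and per: "angle_periodic f (Tdom T)"
    using assms by (auto simp: A_space_def)
  have "Tdom_fundamental T \<subseteq> Tdom T" by (auto simp: Tdom_fundamental_def)
  then have "compact (f ` Tdom_fundamental T)"
    by (intro compact_continuous_image continuous_on_subset[OF cont] compact_Tdom_fundamental)
  then obtain B where B: "\<And>y. y \<in> f ` Tdom_fundamental T \<Longrightarrow> norm y \<le> B"
    by (meson compact_imp_bounded bounded_iff)
  show ?thesis
  proof (rule that)
    fix z :: "(complex^'n) \<times> (complex^'n)"
    assume "z \<in> Tdom T"
    then obtain z' where "z' \<in> Tdom_fundamental T" "f z' = f z"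
      using angle_periodic_reduce_to_fundamental[OF per] by blast
    then show "cmod (f z) \<le> B" using B by force
  qed
qed

lemma supnorm_upper:
  assumes bnd: "\<And>z. z \<in> Tdom T \<Longrightarrow> cmod (f z) \<le> B" and "t \<le> T" and z: "z \<in> Tdom t"
  shows "cmod (f z) \<le> supnorm t f"
proof -
  have "cmod (f x) \<le> B" if "x \<in> Tdom t" for x
    by (rule bnd[OF subsetD[OF Tdom_mono[OF \<open>t \<le> T\<close>] that]])
  then have "bdd_above ((\<lambda>z. cmod (f z)) ` Tdom t)" by (rule bdd_aboveI2)
  then show ?thesis unfolding supnorm_def by (rule cSUP_upper[OF z])
qed

lemma supnorm_square_le:
  fixes f :: "(complex^'n) \<times> (complex^'n) \<Rightarrow> complex"
  assumes t: "0 \<le> t" and bnd: "\<And>z. z \<in> Tdom t \<Longrightarrow> cmod (f z) \<le> B"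
    and sq: "\<And>z. z \<in> Tdom t \<Longrightarrow> (cmod (f z))\<^sup>2 \<le> M"
  shows "(supnorm t f)\<^sup>2 \<le> M"
proof -
  have zero: "(0, 0) \<in> Tdom t" by (rule zero_in_Tdom[OF t])
  have "0 \<le> supnorm t f"
    by (rule order.trans[OF norm_ge_zero supnorm_upper[OF bnd order.refl zero]])
  moreover have "supnorm t f \<le> sqrt M"
    unfolding supnorm_def using zero by (intro cSUP_least) (auto simp: real_le_rsqrt sq)
  moreover have "0 \<le> M" by (rule order.trans[OF zero_le_power2 sq[OF zero]])
  ultimately show ?thesis using power_mono[of "supnorm t f" "sqrt M" 2] by simp
qed

text \<open>Phragmen-Lindeloef on a strip: the factor \<open>exp (\<epsilon> u\<^sup>2)\<close> decays like
  \<open>exp (- \<epsilon> (Im u)\<^sup>2)\<close>, so the bound \<open>B\<close> on \<open>h\<close> is beaten on the horizontal sides of a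
  tall enough rectangle and the maximum modulus principle applies there.\<close>

lemma strip_maximum_perturbed:
  fixes h :: "complex \<Rightarrow> complex"
  assumes d: "0 < d" and e: "0 < \<epsilon>"
    and cont: "continuous_on {u. \<bar>Re u\<bar> \<le> d} h"
    and hol: "h holomorphic_on {u. \<bar>Re u\<bar> < d}"
    and bnd: "\<And>u. \<bar>Re u\<bar> \<le> d \<Longrightarrow> cmod (h u) \<le> B"
    and bd: "\<And>u. \<bar>Re u\<bar> = d \<Longrightarrow> cmod (h u) \<le> K"
  shows "cmod (h 0) \<le> K * exp (\<epsilon> * d\<^sup>2) + \<epsilon>"
proof -
  have K0: "0 \<le> K" using bd[of "complex_of_real d"] d by (smt (verit) Re_complex_of_real norm_ge_zero)
  define C where "C = max 1 B"
  have C: "1 \<le> C" "B \<le> C" by (auto simp: C_def)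
  define Y where "Y = sqrt ((\<bar>ln (C/\<epsilon>)\<bar> + \<epsilon> * d\<^sup>2) / \<epsilon>)"
  have "0 \<le> (\<bar>ln (C/\<epsilon>)\<bar> + \<epsilon> * d\<^sup>2) / \<epsilon>" using e by simp
  then have Y0: "0 \<le> Y" and Y2: "\<epsilon> * Y\<^sup>2 = \<bar>ln (C/\<epsilon>)\<bar> + \<epsilon> * d\<^sup>2"
    using e by (simp_all add: Y_def)
  define k where "k u = h u * exp (complex_of_real \<epsilon> * u\<^sup>2)" for u
  have norm_k: "cmod (k u) = cmod (h u) * exp (\<epsilon> * ((Re u)\<^sup>2 - (Im u)\<^sup>2))" for u
    by (simp add: k_def norm_mult norm_exp_eq_Re Re_power2)
  define S where "S = cbox (Complex (-d) (-Y)) (Complex d Y)"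
  have "cmod (k 0) \<le> K * exp (\<epsilon> * d\<^sup>2) + \<epsilon>"
  proof (rule maximum_modulus_frontier[of k S])
    have "interior S \<subseteq> {u. \<bar>Re u\<bar> < d}"
      by (auto simp: S_def interior_cbox in_box_complex_iff)
    then show "k holomorphic_on interior S"
      unfolding k_def by (intro holomorphic_intros holomorphic_on_subset[OF hol])
    have "closure S \<subseteq> {u. \<bar>Re u\<bar> \<le> d}"
      by (auto simp: S_def in_cbox_complex_iff)
    then show "continuous_on (closure S) k"
      unfolding k_def by (intro continuous_intros continuous_on_subset[OF cont])
    show "bounded S" by (simp add: S_def)
    show "0 \<in> S" using d Y0 by (simp add: S_def in_cbox_complex_iff)
    fix z assume "z \<in> frontier S"
    then have z: "\<bar>Re z\<bar> \<le> d" "\<bar>Re z\<bar> = d \<or> \<bar>Im z\<bar> = Y"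
      by (auto simp: S_def frontier_cbox in_box_complex_iff in_cbox_complex_iff)
    have Re2: "(Re z)\<^sup>2 \<le> d\<^sup>2" using z(1) d by (simp add: abs_le_square_iff[symmetric])
    from z(2) show "cmod (k z) \<le> K * exp (\<epsilon> * d\<^sup>2) + \<epsilon>"
    proof
      assume side: "\<bar>Re z\<bar> = d"
      have "(Re z)\<^sup>2 - (Im z)\<^sup>2 \<le> d\<^sup>2" using Re2 zero_le_power2[of "Im z"] by linarith
      then have "exp (\<epsilon> * ((Re z)\<^sup>2 - (Im z)\<^sup>2)) \<le> exp (\<epsilon> * d\<^sup>2)"
        using e by (simp add: mult_left_mono)
      then have "cmod (k z) \<le> K * exp (\<epsilon> * d\<^sup>2)"
        unfolding norm_k using bd[OF side] K0 by (intro mult_mono) auto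
      then show ?thesis using e by linarith
    next
      assume "\<bar>Im z\<bar> = Y"
      then have "(Im z)\<^sup>2 = Y\<^sup>2" by (metis power2_abs)
      then have "\<epsilon> * ((Re z)\<^sup>2 - (Im z)\<^sup>2) \<le> \<epsilon> * d\<^sup>2 - \<epsilon> * Y\<^sup>2"
        using e Re2 by (simp add: algebra_simps mult_left_mono)
      also have "\<dots> \<le> ln (\<epsilon> / C)"
        using e C by (simp add: Y2 ln_div)
      finally have "exp (\<epsilon> * ((Re z)\<^sup>2 - (Im z)\<^sup>2)) \<le> \<epsilon> / C"
        using e C by (metis exp_le_cancel_iff exp_ln divide_pos_pos less_le_trans zero_less_one)
      then have "cmod (k z) \<le> C * (\<epsilon> / C)"
        unfolding norm_k using bnd[OF z(1)] C by (intro mult_mono) auto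
      also have "\<dots> = \<epsilon>" using C by simp
      finally show ?thesis using mult_nonneg_nonneg[OF K0 exp_ge_zero[of "\<epsilon> * d\<^sup>2"]] by linarith
    qed
  qed
  then show ?thesis by (simp add: k_def)
qed

lemma strip_maximum:
  fixes h :: "complex \<Rightarrow> complex"
  assumes d: "0 < d"
    and cont: "continuous_on {u. \<bar>Re u\<bar> \<le> d} h"
    and hol: "h holomorphic_on {u. \<bar>Re u\<bar> < d}"
    and bnd: "\<And>u. \<bar>Re u\<bar> \<le> d \<Longrightarrow> cmod (h u) \<le> B"
    and bd: "\<And>u. \<bar>Re u\<bar> = d \<Longrightarrow> cmod (h u) \<le> K"
  shows "cmod (h 0) \<le> K"
proof (rule tendsto_le[OF _ _ tendsto_const])
  have "((\<lambda>\<epsilon>. K * exp (\<epsilon> * d\<^sup>2) + \<epsilon>) \<longlongrightarrow> K * exp (0 * d\<^sup>2) + 0) (at_right 0)"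
    by (intro tendsto_intros)
  then show "((\<lambda>\<epsilon>. K * exp (\<epsilon> * d\<^sup>2) + \<epsilon>) \<longlongrightarrow> K) (at_right 0)"
    by simp
  show "\<forall>\<^sub>F \<epsilon> in at_right 0. cmod (h 0) \<le> K * exp (\<epsilon> * d\<^sup>2) + \<epsilon>"
    using eventually_at_right_less[of 0]
    by eventually_elim (rule strip_maximum_perturbed[OF d _ cont hol bnd bd])
qed simp

text \<open>The product \<open>g (c + u) * g (c - u)\<close> carries the bound \<open>M\<^sub>0 * M\<^sub>1\<close> on both
  boundary lines of the strip.\<close>

lemma strip_midpoint_square_le:
  fixes g :: "complex \<Rightarrow> complex"
  assumes d: "0 < d"
    and cont: "continuous_on {u. c - d \<le> Re u \<and> Re u \<le> c + d} g"
    and hol: "g holomorphic_on {u. c - d < Re u \<and> Re u < c + d}"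
    and bnd: "\<And>u. c - d \<le> Re u \<Longrightarrow> Re u \<le> c + d \<Longrightarrow> cmod (g u) \<le> B"
    and left: "\<And>u. Re u = c - d \<Longrightarrow> cmod (g u) \<le> M\<^sub>0"
    and right: "\<And>u. Re u = c + d \<Longrightarrow> cmod (g u) \<le> M\<^sub>1"
  shows "(cmod (g (of_real c)))\<^sup>2 \<le> M\<^sub>0 * M\<^sub>1"
proof -
  define h where "h u = g (of_real c + u) * g (of_real c - u)" for u
  have M0: "0 \<le> M\<^sub>0" using order.trans[OF norm_ge_zero left[of "of_real (c - d)"]] by simp
  have M1: "0 \<le> M\<^sub>1" using order.trans[OF norm_ge_zero right[of "of_real (c + d)"]] by simp
  have "cmod (h 0) \<le> M\<^sub>0 * M\<^sub>1"
  proof (rule strip_maximum[OF d])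
    have "(\<lambda>u. of_real c + u) ` {u. \<bar>Re u\<bar> \<le> d} \<subseteq> {u. c - d \<le> Re u \<and> Re u \<le> c + d}"
      "(\<lambda>u. of_real c - u) ` {u. \<bar>Re u\<bar> \<le> d} \<subseteq> {u. c - d \<le> Re u \<and> Re u \<le> c + d}"
      by auto
    then show "continuous_on {u. \<bar>Re u\<bar> \<le> d} h" unfolding h_def
      by (intro continuous_on_mult continuous_on_compose2[OF cont] continuous_intros)
    have "(\<lambda>u. of_real c + u) ` {u. \<bar>Re u\<bar> < d} \<subseteq> {u. c - d < Re u \<and> Re u < c + d}"
      "(\<lambda>u. of_real c - u) ` {u. \<bar>Re u\<bar> < d} \<subseteq> {u. c - d < Re u \<and> Re u < c + d}"
      by auto
    then have "(g \<circ> (\<lambda>u. of_real c + u)) holomorphic_on {u. \<bar>Re u\<bar> < d}"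
      "(g \<circ> (\<lambda>u. of_real c - u)) holomorphic_on {u. \<bar>Re u\<bar> < d}"
      by (auto intro!: holomorphic_on_compose_gen[OF _ hol] holomorphic_intros)
    then show "h holomorphic_on {u. \<bar>Re u\<bar> < d}"
      unfolding h_def using holomorphic_on_mult by (auto simp: comp_def)
    have B0: "0 \<le> B" using order.trans[OF norm_ge_zero bnd[of "of_real c"]] d by simp
    show "cmod (h u) \<le> B * B" if "\<bar>Re u\<bar> \<le> d" for u
      unfolding h_def norm_mult using that bnd[of "of_real c + u"] bnd[of "of_real c - u"] B0
      by (intro mult_mono) auto
    show "cmod (h u) \<le> M\<^sub>0 * M\<^sub>1" if "\<bar>Re u\<bar> = d" for u
    proof (cases "Re u = d")
      case True
      then have "cmod (g (of_real c + u)) \<le> M\<^sub>1" "cmod (g (of_real c - u)) \<le> M\<^sub>0"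
        by (auto intro!: left right)
      then show ?thesis unfolding h_def norm_mult using M0 M1
        by (metis mult.commute mult_mono norm_ge_zero)
    next
      case False
      then have "Re u = - d" using that by linarith
      then have "cmod (g (of_real c + u)) \<le> M\<^sub>0" "cmod (g (of_real c - u)) \<le> M\<^sub>1"
        by (auto intro!: left right)
      then show ?thesis unfolding h_def norm_mult using M0 M1 by (intro mult_mono) auto
    qed
  qed
  then show ?thesis by (simp add: h_def norm_mult power2_eq_square)
qed

lemma complex_linear_differential_scale:
  fixes D :: "(complex^'n) \<times> (complex^'n) \<Rightarrow> complex"
  assumes lin: "linear D" and i: "\<forall>v. D (\<i> *s fst v, \<i> *s snd v) = \<i> * D v"
  shows "D (c *s P, c *s Q) = c * D (P, Q)"
proof -
  have c: "c = of_real (Re c) + \<i> * of_real (Im c)" by (simp add: complex_eq_iff)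
  have sR: "r *\<^sub>R z = of_real r * z" for r and z :: complex by (simp add: scaleR_conv_of_real)
  have "(c *s P, c *s Q) = Re c *\<^sub>R (P, Q) + Im c *\<^sub>R (\<i> *s P, \<i> *s Q)"
    by (rule prod_eqI) (simp_all add: vec_eq_iff sR algebra_simps, (subst c, simp add: algebra_simps)+)
  then have "D (c *s P, c *s Q) = Re c *\<^sub>R D (P, Q) + Im c *\<^sub>R D (\<i> *s P, \<i> *s Q)"
    by (simp only: linear_add[OF lin] linear_scale[OF lin])
  also have "\<dots> = Re c *\<^sub>R D (P, Q) + Im c *\<^sub>R (\<i> * D (P, Q))"
    using i by simp
  also have "\<dots> = c * D (P, Q)"
    by (subst (3) c) (simp add: sR algebra_simps)
  finally show ?thesis .
qed

lemma holo_several_compose_line: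
  fixes f :: "(complex^'n) \<times> (complex^'n) \<Rightarrow> complex"
  assumes f: "holo_several f S" and u: "\<gamma> u \<in> S"
    and \<gamma>: "(\<gamma> has_derivative (\<lambda>v. (v *s A, v *s B))) (at u)"
  shows "(\<lambda>u. f (\<gamma> u)) field_differentiable at u"
proof -
  obtain D where D: "(f has_derivative D) (at (\<gamma> u))"
    and i: "\<forall>v. D (\<i> *s fst v, \<i> *s snd v) = \<i> * D v"
    using f u unfolding holo_several_def by blast
  have lin: "linear D" using has_derivative_linear[OF D] .
  have scale: "D (v *s A, v *s B) = v * D (A, B)" for v
    by (rule complex_linear_differential_scale[OF lin i])
  have "((\<lambda>u. f (\<gamma> u)) has_derivative (\<lambda>v. D (A, B) * v)) (at u)"
    using diff_chain_at[OF \<gamma> D] unfolding comp_def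
    by (rule has_derivative_eq_rhs) (simp add: fun_eq_iff scale mult.commute)
  then show ?thesis unfolding field_differentiable_def has_field_derivative_def by blast
qed

lemma has_derivative_scalar_mult_vec:
  fixes B :: "complex^'n"
  assumes "(g has_field_derivative g') (at u)"
  shows "((\<lambda>u. g u *s B) has_derivative (\<lambda>v. v *s (g' *s B))) (at u)"
proof -
  have sR: "r *\<^sub>R z = of_real r * z" for r and z :: complex by (simp add: scaleR_conv_of_real)
  have "linear (\<lambda>w::complex. w *s B)"
    by (rule linearI) (simp_all add: vec_eq_iff algebra_simps sR)
  then have "((\<lambda>w. w *s B) has_derivative (\<lambda>w. w *s B)) (at (g u))"
    by (simp add: linear_conv_bounded_linear bounded_linear_imp_has_derivative)
  from has_derivative_compose[OF assms[unfolded has_field_derivative_def] this]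
  show ?thesis
    by (rule has_derivative_eq_rhs) (simp add: fun_eq_iff vec_eq_iff mult_ac)
qed

definition strip_line ::
  "real \<Rightarrow> real \<Rightarrow> (complex^'n) \<times> (complex^'n) \<Rightarrow> complex \<Rightarrow> (complex^'n) \<times> (complex^'n)" where
  "strip_line s \<kappa> p u =
     ((\<chi> j. complex_of_real (Re (fst p $ j))) + u *s (\<chi> j. \<i> * complex_of_real (Im (fst p $ j) / s)),
      exp (complex_of_real \<kappa> * (u - complex_of_real s)) *s snd p)"

lemma strip_line_center: "0 < s \<Longrightarrow> strip_line s \<kappa> p (complex_of_real s) = p"
  by (cases p) (simp add: strip_line_def vec_eq_iff complex_eq_iff)

lemma strip_line_bounds:
  assumes p: "p \<in> Tdom s" and s: "0 < s" and u: "0 \<le> Re u"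
  shows "\<bar>Im (fst (strip_line s \<kappa> p u) $ j)\<bar> \<le> Re u"
    and "cmod (snd (strip_line s \<kappa> p u) $ j) \<le> s * exp (\<kappa> * (Re u - s))"
proof -
  have Im: "\<bar>Im (fst p $ j)\<bar> \<le> s" and r: "cmod (snd p $ j) \<le> s"
    using p by (auto simp: Tdom_eq)
  have "\<bar>Im (fst (strip_line s \<kappa> p u) $ j)\<bar> = Re u * (\<bar>Im (fst p $ j)\<bar> / s)"
    using u s by (simp add: strip_line_def abs_mult)
  also have "\<dots> \<le> Re u * 1"
    using Im s u by (intro mult_left_mono) auto
  finally show "\<bar>Im (fst (strip_line s \<kappa> p u) $ j)\<bar> \<le> Re u" by simp
  have "cmod (snd (strip_line s \<kappa> p u) $ j) = exp (\<kappa> * (Re u - s)) * cmod (snd p $ j)"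
    by (simp add: strip_line_def norm_mult norm_exp_eq_Re)
  also have "\<dots> \<le> exp (\<kappa> * (Re u - s)) * s"
    using r by (intro mult_left_mono) auto
  finally show "cmod (snd (strip_line s \<kappa> p u) $ j) \<le> s * exp (\<kappa> * (Re u - s))"
    by (simp add: mult.commute)
qed

lemma strip_line_in_Tdom:
  assumes "p \<in> Tdom s" "0 < s" "0 \<le> Re u" "Re u \<le> t" "s * exp (\<kappa> * (Re u - s)) \<le> t"
  shows "strip_line s \<kappa> p u \<in> Tdom t"
proof -
  have "\<bar>Im (fst (strip_line s \<kappa> p u) $ j)\<bar> \<le> t \<and> cmod (snd (strip_line s \<kappa> p u) $ j) \<le> t" for j
    using strip_line_bounds[OF assms(1-3), of \<kappa> j] assms(4,5) by linarith
  then show ?thesis by (simp add: Tdom_eq)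
qed

lemma strip_line_in_interior:
  assumes "p \<in> Tdom s" "0 < s" "0 \<le> Re u" "Re u < t" "s * exp (\<kappa> * (Re u - s)) < t"
  shows "strip_line s \<kappa> p u \<in> interior (Tdom t)"
proof -
  have "\<bar>Im (fst (strip_line s \<kappa> p u) $ j)\<bar> < t \<and> cmod (snd (strip_line s \<kappa> p u) $ j) < t" for j
    using strip_line_bounds[OF assms(1-3), of \<kappa> j] assms(4,5) by linarith
  then show ?thesis using interior_Tdom_superset by blast
qed

lemma strip_line_has_derivative:
  "\<exists>A B. (strip_line s \<kappa> p has_derivative (\<lambda>v. (v *s A, v *s B))) (at u)"
proof -
  let ?e = "\<lambda>u. exp (complex_of_real \<kappa> * (u - complex_of_real s))"
  let ?V = "\<chi> j. \<i> * complex_of_real (Im (fst p $ j) / s)"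
  have "((\<lambda>u. (\<chi> j. complex_of_real (Re (fst p $ j))) + u *s ?V) has_derivative (\<lambda>v. v *s ?V)) (at u)"
    using has_derivative_add[OF has_derivative_const has_derivative_scalar_mult_vec[OF DERIV_ident]]
    by simp
  moreover have "(?e has_field_derivative complex_of_real \<kappa> * ?e u) (at u)"
    by (auto intro!: derivative_eq_intros)
  then have "((\<lambda>u. ?e u *s snd p) has_derivative (\<lambda>v. v *s ((complex_of_real \<kappa> * ?e u) *s snd p))) (at u)"
    by (rule has_derivative_scalar_mult_vec)
  ultimately have "((\<lambda>u. ((\<chi> j. complex_of_real (Re (fst p $ j))) + u *s ?V, ?e u *s snd p))
      has_derivative (\<lambda>v. (v *s ?V, v *s ((complex_of_real \<kappa> * ?e u) *s snd p)))) (at u)"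
    by (rule has_derivative_Pair)
  then show ?thesis unfolding strip_line_def[abs_def] by (intro exI)
qed

lemma continuous_on_strip_line: "continuous_on S (strip_line s \<kappa> p)"
proof (rule continuous_at_imp_continuous_on, rule ballI)
  fix u
  obtain A B where "(strip_line s \<kappa> p has_derivative (\<lambda>v. (v *s A, v *s B))) (at u)"
    using strip_line_has_derivative by blast
  then show "isCont (strip_line s \<kappa> p) u" by (rule has_derivative_continuous)
qed

lemma le_minus_ln_one_minus:
  fixes s \<sigma>\<^sub>0 :: real
  assumes "0 < \<sigma>\<^sub>0" "\<sigma>\<^sub>0 < s" "s - ln (1 - \<sigma>\<^sub>0 / s) \<le> 1"
  shows "\<sigma>\<^sub>0 \<le> - ln (1 - \<sigma>\<^sub>0 / s)"
proof -
  have "0 < \<sigma>\<^sub>0 / s" using assms(1,2) by simp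
  moreover have quot: "\<sigma>\<^sub>0 / s \<le> - ln (1 - \<sigma>\<^sub>0 / s)"
    using ln_add_one_self_le_self2[of "- (\<sigma>\<^sub>0 / s)"] assms(1,2) by simp
  ultimately have "s \<le> 1" using assms(3) by linarith
  then have "\<sigma>\<^sub>0 \<le> \<sigma>\<^sub>0 / s" using assms(1,2) by (simp add: le_divide_eq mult_le_cancel_left1)
  with quot show ?thesis by linarith
qed

lemma mult_exp_le_add:
  fixes s \<sigma> :: real
  assumes "0 < s" "0 \<le> \<sigma>" "s + \<sigma> \<le> 1"
  shows "s * exp \<sigma> \<le> s + \<sigma>"
proof -
  have "exp \<sigma> * (1 - \<sigma>) \<le> exp \<sigma> * exp (- \<sigma>)"
    using exp_ge_add_one_self[of "- \<sigma>"] by (intro mult_left_mono) auto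
  then have "s * exp \<sigma> * (1 - \<sigma>) \<le> s"
    using assms(1) by (simp add: exp_minus mult.assoc mult_left_le)
  also have "\<dots> \<le> (s + \<sigma>) * (1 - \<sigma>)"
    using mult_nonneg_nonneg[of \<sigma> "1 - s - \<sigma>"] assms by (simp add: algebra_simps)
  finally show ?thesis using assms by (simp add: mult_le_cancel_right)
qed

lemma norm_square_le_supnorm_mult:
  fixes f :: "(complex^'n) \<times> (complex^'n) \<Rightarrow> complex"
  assumes f: "f \<in> A_space T" and p: "p \<in> Tdom s"
    and d: "0 < d" "d < s" "s + d \<le> T" and \<kappa>: "0 < \<kappa>"
    and left: "s * exp (- (\<kappa> * d)) \<le> s - d" and right: "s * exp (\<kappa> * d) \<le> T"
  shows "(cmod (f p))\<^sup>2 \<le> supnorm (s - d) f * supnorm T f"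
proof -
  obtain B where B: "\<And>z. z \<in> Tdom T \<Longrightarrow> cmod (f z) \<le> B" using A_space_bounded[OF f] by blast
  have cont: "continuous_on (Tdom T) f" and hol: "holo_several f (interior (Tdom T))"
    using f by (auto simp: A_space_def)
  have s: "0 < s" using d by linarith
  let ?\<gamma> = "strip_line s \<kappa> p"
  have in_T: "?\<gamma> u \<in> Tdom T" if "s - d \<le> Re u" "Re u \<le> s + d" for u
  proof (rule strip_line_in_Tdom[OF p s])
    have "s * exp (\<kappa> * (Re u - s)) \<le> s * exp (\<kappa> * d)" using that \<kappa> s by simp
    then show "s * exp (\<kappa> * (Re u - s)) \<le> T" using right by linarith
  qed (use that d in auto)
  have in_interior: "?\<gamma> u \<in> interior (Tdom T)" if "s - d < Re u" "Re u < s + d" for u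
  proof (rule strip_line_in_interior[OF p s])
    have "s * exp (\<kappa> * (Re u - s)) < s * exp (\<kappa> * d)" using that \<kappa> s by simp
    then show "s * exp (\<kappa> * (Re u - s)) < T" using right by linarith
  qed (use that d in auto)
  have in_left: "?\<gamma> u \<in> Tdom (s - d)" if "Re u = s - d" for u
    by (rule strip_line_in_Tdom[OF p s]) (use that d left in auto)
  have "(cmod (f (?\<gamma> (of_real s))))\<^sup>2 \<le> supnorm (s - d) f * supnorm T f"
  proof (rule strip_midpoint_square_le[OF \<open>0 < d\<close>])
    show "continuous_on {u. s - d \<le> Re u \<and> Re u \<le> s + d} (\<lambda>u. f (?\<gamma> u))"
      by (rule continuous_on_compose2[OF cont continuous_on_strip_line]) (use in_T in auto)
    show "(\<lambda>u. f (?\<gamma> u)) holomorphic_on {u. s - d < Re u \<and> Re u < s + d}"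
    proof (unfold holomorphic_on_def, rule ballI)
      fix u assume "u \<in> {u. s - d < Re u \<and> Re u < s + d}"
      then have "?\<gamma> u \<in> interior (Tdom T)" using in_interior by simp
      moreover obtain A B where "(?\<gamma> has_derivative (\<lambda>v. (v *s A, v *s B))) (at u)"
        using strip_line_has_derivative by blast
      ultimately show "(\<lambda>u. f (?\<gamma> u)) field_differentiable at u within {u. s - d < Re u \<and> Re u < s + d}"
        by (rule field_differentiable_at_within[OF holo_several_compose_line[OF hol]])
    qed
    show "cmod (f (?\<gamma> u)) \<le> B" if "s - d \<le> Re u" "Re u \<le> s + d" for u
      using B in_T that by blast
    show "cmod (f (?\<gamma> u)) \<le> supnorm (s - d) f" if "Re u = s - d" for u
      using supnorm_upper[where f = f, OF B _ in_left[OF that]] d by simp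
    show "cmod (f (?\<gamma> u)) \<le> supnorm T f" if "Re u = s + d" for u
      using supnorm_upper[where f = f, OF B order.refl in_T] that d by simp
  qed
  then show ?thesis by (simp add: strip_line_center[OF s])
qed

theorem corollary2:
  fixes f :: "(complex^'n) \<times> (complex^'n) \<Rightarrow> complex"
    and s \<sigma>0 \<sigma>1 :: real
  assumes "0 < \<sigma>0" and "\<sigma>0 < s"
    and "\<sigma>1 = - ln (1 - \<sigma>0 / s)"
    and "s + \<sigma>1 \<le> 1"
    and "f \<in> A_space (s + \<sigma>1)"
  shows "(supnorm s f)\<^sup>2 \<le> supnorm (s - \<sigma>0) f * supnorm (s + \<sigma>1) f"
proof -
  have "\<sigma>0 \<le> \<sigma>1" using le_minus_ln_one_minus[OF assms(1,2)] assms(3,4) by simp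
  have \<kappa>: "\<sigma>1 / \<sigma>0 * \<sigma>0 = \<sigma>1" using assms(1) by simp
  have "0 < 1 - \<sigma>0 / s" using assms(1,2) by simp
  then have "exp (- \<sigma>1) = 1 - \<sigma>0 / s" using assms(3) by simp
  then have left: "s * exp (- (\<sigma>1 / \<sigma>0 * \<sigma>0)) = s - \<sigma>0"
    using assms(1,2) by (simp add: \<kappa> field_simps)
  have right: "s * exp (\<sigma>1 / \<sigma>0 * \<sigma>0) \<le> s + \<sigma>1"
    using mult_exp_le_add[of s \<sigma>1] \<kappa> assms(1,2,4) \<open>\<sigma>0 \<le> \<sigma>1\<close> by simp
  obtain B where B: "\<And>z. z \<in> Tdom (s + \<sigma>1) \<Longrightarrow> cmod (f z) \<le> B"
    using A_space_bounded[OF assms(5)] by blast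
  show ?thesis
  proof (rule supnorm_square_le)
    show "0 \<le> s" using assms(1,2) by simp
    have "Tdom s \<subseteq> (Tdom (s + \<sigma>1) :: ((complex^'n) \<times> (complex^'n)) set)"
      by (rule Tdom_mono) (use \<open>\<sigma>0 \<le> \<sigma>1\<close> assms(1) in linarith)
    then show "cmod (f z) \<le> B" if "z \<in> Tdom s" for z
      using B that by blast
    have \<kappa>0: "0 < \<sigma>1 / \<sigma>0" using \<open>\<sigma>0 \<le> \<sigma>1\<close> assms(1) by (intro divide_pos_pos) auto
    show "(cmod (f p))\<^sup>2 \<le> supnorm (s - \<sigma>0) f * supnorm (s + \<sigma>1) f" if "p \<in> Tdom s" for p
      using norm_square_le_supnorm_mult[OF assms(5) that assms(1,2) _ \<kappa>0 left[THEN eq_refl] right]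
        \<open>\<sigma>0 \<le> \<sigma>1\<close> by simp
  qed
qed

end
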